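(* Let $c\neq-\frac{22}{5}$. For all integers $n\ge1$, the following identity holds in $\mathcal{W}^c_3$: $$U_{0,0}\circ_0\partial^{n-1}W-\frac{64}{22+5c}\partial^n(:LLW:)+\frac{64}{22+5c}\partial^{n-1}(:(\partial L)LW:)-\frac{10(14+c)}{3(22+5c)}\partial^{n+2}(:LW:)$$ $$+\frac{86+5c}{22+5c}\partial^{n+1}(:(\partial L)W:)-\frac{26+3c}{22+5c}\partial^n(:(\partial^2L)W:)+\frac{2(c-2)}{3(22+5c)}\partial^{n-1}(:(\partial^3L)W:)-\frac{-186+11c+c^2}{36(22+5c)}\partial^{n+4}W=0.$$
   Context: For vertex algebra elements, $a(z)b(w)\sim\sum_{n\ge0}(a\circ_nb)(w)(z-w)^{-n-1}$ and $:ab:$ is the normally ordered product; iterated products are nested to the right, e.g. $:LLW:=\,:L(:LW:):$. For $c\ne-\frac{22}{5}$, $\mathcal{W}^c_3$ is the vertex algebra strongly generated by a Virasoro field $L$ and a weight $3$ primary field $W$ with OPEs $L(z)L(w)\sim \frac c2(z-w)^{-4}+2L(w)(z-w)^{-2}+\partial L(w)(z-w)^{-1}$, $L(z)W(w)\sim 3W(w)(z-w)^{-2}+\partial W(w)(z-w)^{-1}$, $W(z)W(w)\sim \frac c3(z-w)^{-6}+2L(w)(z-w)^{-4}+\partial L(w)(z-w)^{-3}+\big(\frac{32}{22+5c}:LL:+\frac{3(c-2)}{2(22+5c)}\partial^2L\big)(w)(z-w)^{-2}+\big(\frac{32}{22+5c}:(\partial L)L:+\frac{c-2}{3(22+5c)}\partial^3L\big)(w)(z-w)^{-1}$.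 $U_{0,0}=\,:WW:$. *)

theory Defs
  imports Complex_Main
begin

text \<open>The underlying space is a type 'v with addition; the scalar action is the parameter sm,
  the vacuum vector is vac, and pr n a b is the n-th product a_(n) b for all integers n.\<close>

definition cvector_space :: "(complex \<Rightarrow> 'v::ab_group_add \<Rightarrow> 'v) \<Rightarrow> bool" where
  "cvector_space sm \<longleftrightarrow>
     (\<forall>x. sm 1 x = x) \<and>
     (\<forall>s t x. sm (s * t) x = sm s (sm t x)) \<and>
     (\<forall>s t x. sm (s + t) x = sm s x + sm t x) \<and>
     (\<forall>s x y. sm s (x + y) = sm s x + sm s y)"

definition vertex_algebra ::
  "(complex \<Rightarrow> 'v::ab_group_add \<Rightarrow> 'v) \<Rightarrow> 'v \<Rightarrow> (int \<Rightarrow> 'v \<Rightarrow> 'v \<Rightarrow> 'v) \<Rightarrow> bool" where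
  "vertex_algebra sm vac pr \<longleftrightarrow>
     cvector_space sm \<and>
     \<comment> \<open>bilinearity of all n-th products\<close>
     (\<forall>n a b x. pr n (a + b) x = pr n a x + pr n b x) \<and>
     (\<forall>n a x y. pr n a (x + y) = pr n a x + pr n a y) \<and>
     (\<forall>n t a x. pr n (sm t a) x = sm t (pr n a x)) \<and>
     (\<forall>n t a x. pr n a (sm t x) = sm t (pr n a x)) \<and>
     \<comment> \<open>truncation (field axiom)\<close>
     (\<forall>a b. \<exists>N::int. \<forall>n\<ge>N. pr n a b = 0) \<and>
     \<comment> \<open>vacuum axioms\<close>
     (\<forall>n a. pr n vac a = (if n = -1 then a else 0)) \<and>
     (\<forall>n a. n \<ge> 0 \<longrightarrow> pr n a vac = 0) \<and>
     (\<forall>a. pr (-1) a vac = a) \<and>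
     \<comment> \<open>Borcherds identity (both sums are finite by truncation)\<close>
     (\<forall>(m::int) (n::int) (k::int) a b x. \<exists>N0::nat. \<forall>N\<ge>N0.
        (\<Sum>j<N. sm ((of_int m :: complex) gchoose j)
                    (pr (m + k - int j) (pr (n + int j) a b) x))
        = (\<Sum>j<N. sm ((-1) ^ j * ((of_int n :: complex) gchoose j))
                    (pr (m + n - int j) a (pr (k + int j) b x)
                     - sm (if even n then 1 else -1) (pr (n + k - int j) b (pr (m + int j) a x)))))"

definition vderiv :: "(int \<Rightarrow> 'v \<Rightarrow> 'v \<Rightarrow> 'v) \<Rightarrow> 'v \<Rightarrow> 'v \<Rightarrow> 'v" where
  "vderiv pr vac a = pr (-2) a vac"

definition nop :: "(int \<Rightarrow> 'v \<Rightarrow> 'v \<Rightarrow> 'v) \<Rightarrow> 'v \<Rightarrow> 'v \<Rightarrow> 'v" where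
  "nop pr a b = pr (-1) a b"

end

theory Submission imports Defs begin

text \<open>For \<open>n = 1\<close> the identity is a finite computation with modes. The Borcherds identity
  expands \<open>(:WW:)_(0) W\<close> into \<open>2 \<Sum>_j W_(-1-j) W_(j) W\<close>; inserting the \<open>W(z)W(w)\<close> OPE, every
  term of the identity becomes a linear combination of monomials in modes of \<open>L\<close> and \<open>W\<close>
  applied to the vacuum. Moving nonnegative modes to the right with the \<open>[W,L]\<close> and \<open>[L,L]\<close>
  brackets puts these monomials into a normal order, and after collecting equal monomials every
  coefficient is a rational function of \<open>c\<close> that vanishes identically. For general \<open>n\<close> apply
  \<open>\<partial>^(n-1)\<close>, which is additive and commutes with zero modes.\<close>

lemma sum_lessThan_truncate:
  fixes f :: "nat \<Rightarrow> 'a::comm_monoid_add"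
  assumes "\<And>j. K \<le> j \<Longrightarrow> f j = 0" and "K \<le> N"
  shows "(\<Sum>j<N. f j) = (\<Sum>j<K. f j)"
  by (rule sum.mono_neutral_right) (use assms in auto)

lemma gbinomial_minus_one_signed: "(-1) ^ j * ((-1 :: 'a::field_char_0) gchoose j) = 1"
proof -
  have "((-1 :: 'a) gchoose j) = (-1) ^ j * (of_nat j gchoose j)"
    using gbinomial_minus[of "1::'a" j] by simp
  then show ?thesis by (simp flip: power_mult_distrib binomial_gbinomial)
qed

lemma gbinomial_minus_two_signed: "(-1) ^ j * ((-2 :: 'a::field_char_0) gchoose j) = of_nat j + 1"
proof -
  have "((-2 :: 'a) gchoose j) = (-1) ^ j * (of_nat (Suc j) gchoose j)"
    using gbinomial_minus[of "2::'a" j] by (simp add: add.commute)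
  also have "(of_nat (Suc j) :: 'a) gchoose j = of_nat (Suc j)"
    by (metis binomial_gbinomial binomial_Suc_n)
  finally show ?thesis by (simp flip: power_mult_distrib)
qed

section \<open>Consequences of the Borcherds identity\<close>

locale vertex_alg =
  fixes sm :: "complex \<Rightarrow> 'v::ab_group_add \<Rightarrow> 'v" and vac :: 'v
    and pr :: "int \<Rightarrow> 'v \<Rightarrow> 'v \<Rightarrow> 'v"
  assumes vertex_algebra: "vertex_algebra sm vac pr"
begin

sublocale module sm
  using vertex_algebra unfolding vertex_algebra_def cvector_space_def
  by unfold_locales (auto simp: mult.commute)

lemma pr_add_left: "pr n (a + b) x = pr n a x + pr n b x"
  and pr_add_right: "pr n a (x + y) = pr n a x + pr n a y"
  and pr_scale_left: "pr n (sm t a) x = sm t (pr n a x)"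
  and pr_scale_right: "pr n a (sm t x) = sm t (pr n a x)"
  and pr_vac_left: "pr n vac a = (if n = -1 then a else 0)"
  and pr_vac_right: "n \<ge> 0 \<Longrightarrow> pr n a vac = 0"
  and pr_minus_one_vac: "pr (-1) a vac = a"
  using vertex_algebra unfolding vertex_algebra_def by simp_all

lemma borcherds: "\<exists>N0::nat. \<forall>N\<ge>N0.
    (\<Sum>j<N. sm ((of_int m :: complex) gchoose j) (pr (m + k - int j) (pr (n + int j) a b) x))
  = (\<Sum>j<N. sm ((-1) ^ j * ((of_int n :: complex) gchoose j))
       (pr (m + n - int j) a (pr (k + int j) b x)
        - sm (if even n then 1 else -1) (pr (n + k - int j) b (pr (m + int j) a x))))"
  using vertex_algebra unfolding vertex_algebra_def by blast

lemma borcherds_truncated: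
  assumes "\<And>j. K1 \<le> j \<Longrightarrow>
      sm ((of_int m :: complex) gchoose j) (pr (m + k - int j) (pr (n + int j) a b) x) = 0"
    and "\<And>j. K2 \<le> j \<Longrightarrow> sm ((-1) ^ j * ((of_int n :: complex) gchoose j))
       (pr (m + n - int j) a (pr (k + int j) b x)
        - sm (if even n then 1 else -1) (pr (n + k - int j) b (pr (m + int j) a x))) = 0"
  shows "(\<Sum>j<K1. sm ((of_int m :: complex) gchoose j) (pr (m + k - int j) (pr (n + int j) a b) x))
       = (\<Sum>j<K2. sm ((-1) ^ j * ((of_int n :: complex) gchoose j))
           (pr (m + n - int j) a (pr (k + int j) b x)
            - sm (if even n then 1 else -1) (pr (n + k - int j) b (pr (m + int j) a x))))"
proof -
  define l where "l j = sm ((of_int m :: complex) gchoose j) (pr (m + k - int j) (pr (n + int j) a b) x)"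
    for j
  define r where "r j = sm ((-1) ^ j * ((of_int n :: complex) gchoose j))
       (pr (m + n - int j) a (pr (k + int j) b x)
        - sm (if even n then 1 else -1) (pr (n + k - int j) b (pr (m + int j) a x)))" for j
  obtain N0 where N0: "\<forall>N\<ge>N0. (\<Sum>j<N. l j) = (\<Sum>j<N. r j)"
    using borcherds unfolding l_def r_def by blast
  define N where "N = max N0 (max K1 K2)"
  have "(\<Sum>j<K1. l j) = (\<Sum>j<N. l j)"
    by (rule sum_lessThan_truncate[symmetric]) (auto simp: l_def assms(1) N_def)
  also have "\<dots> = (\<Sum>j<N. r j)"
    using N0 by (simp add: N_def)
  also have "\<dots> = (\<Sum>j<K2. r j)"
    by (rule sum_lessThan_truncate) (auto simp: r_def assms(2) N_def)
  finally show ?thesis unfolding l_def r_def .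
qed

lemma pr_zero_left [simp]: "pr n 0 x = 0"
  using pr_add_left[of n 0 0 x] by simp

lemma pr_zero_right [simp]: "pr n a 0 = 0"
  using pr_add_right[of n a 0 0] by simp

lemma pr_diff_left: "pr n (a - b) x = pr n a x - pr n b x"
  by (metis add_diff_cancel pr_add_left diff_add_cancel add_diff_cancel_right')

abbreviation D :: "'v \<Rightarrow> 'v" where "D \<equiv> vderiv pr vac"

lemma vderiv_add: "D (x + y) = D x + D y"
  and vderiv_diff: "D (x - y) = D x - D y"
  and vderiv_scale: "D (sm t x) = sm t (D x)"
  by (simp_all add: vderiv_def pr_add_left pr_diff_left pr_scale_left)

text \<open>Translation covariance: Borcherds with \<open>(m, k) = (0, -2)\<close> and third argument the vacuum.\<close>

lemma vderiv_pr: "D (pr n a b) = pr n a (D b) - sm (of_int n) (pr (n - 1) a b)"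
proof -
  have "(\<Sum>j<1. sm ((of_int 0 :: complex) gchoose j) (pr (0 + -2 - int j) (pr (n + int j) a b) vac))
      = (\<Sum>j<2. sm ((-1) ^ j * ((of_int n :: complex) gchoose j))
           (pr (0 + n - int j) a (pr (-2 + int j) b vac)
            - sm (if even n then 1 else -1) (pr (n + -2 - int j) b (pr (0 + int j) a vac))))"
    by (rule borcherds_truncated) (auto simp: gbinomial_0_left pr_vac_right)
  then show ?thesis
    by (simp add: eval_nat_numeral vderiv_def pr_vac_right pr_minus_one_vac)
qed

text \<open>The derivative property: Borcherds with \<open>(m, n) = (0, -2)\<close> and middle argument the
  vacuum; on the right only the index \<open>j\<close> with \<open>k + j = -1\<close> or \<open>k - j = 1\<close> survives.\<close>

lemma pr_vderiv_left: "pr k (D a) x = - sm (of_int k) (pr (k - 1) a x)"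
proof -
  define K where "K = nat \<bar>k\<bar> + 1"
  let ?r = "\<lambda>j. sm ((-1) ^ j * ((of_int (-2) :: complex) gchoose j))
      (pr (0 + -2 - int j) a (pr (k + int j) vac x)
       - sm (if even (-2::int) then 1 else -1) (pr (-2 + k - int j) vac (pr (0 + int j) a x)))"
  have "(\<Sum>j<1. sm ((of_int 0 :: complex) gchoose j) (pr (0 + k - int j) (pr (-2 + int j) a vac) x))
      = (\<Sum>j<K. ?r j)"
    by (rule borcherds_truncated) (auto simp: gbinomial_0_left pr_vac_left K_def)
  moreover have "(\<Sum>j<K. ?r j) = - sm (of_int k) (pr (k - 1) a x)"
  proof (cases k "0::int" rule: linorder_cases)
    case less
    have "(\<Sum>j<K. ?r j) = (\<Sum>j<K. if j = nat (-1 - k) then ?r (nat (-1 - k)) else 0)"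
      by (rule sum.cong) (use less in \<open>auto simp: pr_vac_left\<close>)
    also have "\<dots> = - sm (of_int k) (pr (k - 1) a x)"
      using less by (simp add: K_def gbinomial_minus_two_signed pr_vac_left of_nat_nat)
    finally show ?thesis .
  next
    case greater
    have "(\<Sum>j<K. ?r j) = (\<Sum>j<K. if j = nat (k - 1) then ?r (nat (k - 1)) else 0)"
      by (rule sum.cong) (use greater in \<open>auto simp: pr_vac_left\<close>)
    also have "\<dots> = - sm (of_int k) (pr (k - 1) a x)"
      using greater by (simp add: K_def gbinomial_minus_two_signed pr_vac_left of_nat_nat)
    finally show ?thesis .
  qed (simp add: pr_vac_left K_def)
  ultimately show ?thesis by (simp add: vderiv_def)
qed

lemma commutator_formula:
  assumes "\<And>j. J \<le> j \<Longrightarrow> pr (int j) a b = 0"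
  shows "pr m a (pr k b x) - pr k b (pr m a x)
       = (\<Sum>j<J. sm ((of_int m :: complex) gchoose j) (pr (m + k - int j) (pr (int j) a b) x))"
proof -
  have "(\<Sum>j<J. sm ((of_int m :: complex) gchoose j) (pr (m + k - int j) (pr (0 + int j) a b) x))
      = (\<Sum>j<1. sm ((-1) ^ j * ((of_int 0 :: complex) gchoose j))
           (pr (m + 0 - int j) a (pr (k + int j) b x)
            - sm (if even (0::int) then 1 else -1) (pr (0 + k - int j) b (pr (m + int j) a x))))"
    by (rule borcherds_truncated) (auto simp: assms gbinomial_0_left)
  then show ?thesis by simp
qed

lemma normal_product_zero_mode:
  assumes "\<And>j. J \<le> j \<Longrightarrow> pr (int j) b x = 0" and "\<And>j. J \<le> j \<Longrightarrow> pr (int j) a x = 0"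
  shows "pr 0 (nop pr a b) x
       = (\<Sum>j<J. pr (-1 - int j) a (pr (int j) b x) + pr (-1 - int j) b (pr (int j) a x))"
proof -
  have "(\<Sum>j<1. sm ((of_int 0 :: complex) gchoose j) (pr (0 + 0 - int j) (pr (-1 + int j) a b) x))
      = (\<Sum>j<J. sm ((-1) ^ j * ((of_int (-1) :: complex) gchoose j))
           (pr (0 + -1 - int j) a (pr (0 + int j) b x)
            - sm (if even (-1::int) then 1 else -1) (pr (-1 + 0 - int j) b (pr (0 + int j) a x))))"
    by (rule borcherds_truncated) (auto simp: assms gbinomial_0_left)
  then show ?thesis by (simp add: gbinomial_minus_one_signed nop_def)
qed

lemma funpow_vderiv_add: "(D ^^ m) (x + y) = (D ^^ m) x + (D ^^ m) y"
  by (induction m) (auto simp: vderiv_add)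

lemma funpow_vderiv_diff: "(D ^^ m) (x - y) = (D ^^ m) x - (D ^^ m) y"
  by (induction m) (auto simp: vderiv_diff)

lemma funpow_vderiv_scale: "(D ^^ m) (sm t x) = sm t ((D ^^ m) x)"
  by (induction m) (auto simp: vderiv_scale)

lemma funpow_vderiv_zero: "(D ^^ m) 0 = 0"
  by (induction m) (auto simp: vderiv_def)

lemma zero_mode_funpow_vderiv: "pr 0 a ((D ^^ m) x) = (D ^^ m) (pr 0 a x)"
proof (induction m)
  case (Suc m)
  have "pr 0 a (D y) = D (pr 0 a y)" for y
    by (simp add: vderiv_pr)
  with Suc show ?case by simp
qed simp

end

section \<open>Linear combinations of mode monomials\<close>

text \<open>A letter \<open>(True, k)\<close> stands for the mode \<open>L_(k)\<close> and \<open>(False, k)\<close> for \<open>W_(k)\<close>; a word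
  \<open>[x1, \<dots>, xr]\<close> stands for \<open>x1 (\<dots> (xr |0\<rangle>))\<close>.\<close>

type_synonym letter = "bool \<times> int"
type_synonym word = "letter list"
type_synonym lincomb = "(complex \<times> word) list"

definition lc_scale :: "complex \<Rightarrow> lincomb \<Rightarrow> lincomb" where
  "lc_scale t xs = map (\<lambda>(a, w). (t * a, w)) xs"

definition lc_prefix :: "letter \<Rightarrow> lincomb \<Rightarrow> lincomb" where
  "lc_prefix x xs = map (\<lambda>(a, w). (a, x # w)) xs"

definition lc_bind :: "lincomb \<Rightarrow> (word \<Rightarrow> lincomb) \<Rightarrow> lincomb" where
  "lc_bind xs g = concat (map (\<lambda>(a, w). lc_scale a (g w)) xs)"

lemma lc_scale_simps [simp]:
  "lc_scale t [] = []"
  "lc_scale t ((a, w) # xs) = (t * a, w) # lc_scale t xs"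
  "lc_scale t (xs @ ys) = lc_scale t xs @ lc_scale t ys"
  by (simp_all add: lc_scale_def)

lemma lc_prefix_simps [simp]:
  "lc_prefix x [] = []"
  "lc_prefix x ((a, w) # xs) = (a, x # w) # lc_prefix x xs"
  "lc_prefix x (xs @ ys) = lc_prefix x xs @ lc_prefix x ys"
  by (simp_all add: lc_prefix_def)

lemma lc_bind_simps [simp]:
  "lc_bind [] g = []"
  "lc_bind ((a, w) # xs) g = lc_scale a (g w) @ lc_bind xs g"
  by (simp_all add: lc_bind_def)

text \<open>\<open>normal_insert f x w\<close> applies the letter \<open>x\<close> to the word \<open>w\<close> and reorders, moving \<open>W_(k)\<close>
  past \<open>L_(k')\<close> and \<open>L_(k)\<close> past \<open>L_(k')\<close> for \<open>k' < k\<close>; the latter only when \<open>k + k' \<noteq> 2\<close>,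
  so that the central term of \<open>[L,L]\<close> never arises. The fuel \<open>f\<close> replaces a termination
  argument: when it runs out the word is returned unchanged, which is still correct.\<close>

fun normal_insert :: "nat \<Rightarrow> letter \<Rightarrow> word \<Rightarrow> lincomb" where
  "normal_insert 0 x w = [(1, x # w)]"
| "normal_insert (Suc f) x [] = (if 0 \<le> snd x then [] else [(1, [x])])"
| "normal_insert (Suc f) x (y # w) =
     (if \<not> fst x \<and> fst y then
        lc_bind (normal_insert f x w) (normal_insert f y)
        @ lc_scale (of_int (snd x - 2 * snd y)) (normal_insert f (False, snd x + snd y - 1) w)
      else if fst x \<and> fst y \<and> snd y < snd x \<and> snd x + snd y \<noteq> 2 then
        lc_bind (normal_insert f x w) (normal_insert f y)
        @ lc_scale (of_int (snd x - snd y)) (normal_insert f (True, snd x + snd y - 1) w)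
      else [(1, x # y # w)])"

primrec normal_word :: "nat \<Rightarrow> word \<Rightarrow> lincomb" where
  "normal_word f [] = [(1, [])]"
| "normal_word f (x # w) = lc_bind (normal_word f w) (normal_insert f x)"

definition normal_lc :: "nat \<Rightarrow> lincomb \<Rightarrow> lincomb" where
  "normal_lc f xs = lc_bind xs (normal_word f)"

text \<open>Translation on words, from \<open>\<partial> |0\<rangle> = 0\<close> and \<open>[\<partial>, x_(k)] = -k x_(k-1)\<close>.\<close>

primrec deriv_word :: "word \<Rightarrow> lincomb" where
  "deriv_word [] = []"
| "deriv_word (x # w) = lc_prefix x (deriv_word w) @ [(- of_int (snd x), (fst x, snd x - 1) # w)]"

definition deriv_lc :: "lincomb \<Rightarrow> lincomb" where
  "deriv_lc xs = lc_bind xs deriv_word"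

fun collect_insert :: "complex \<times> word \<Rightarrow> lincomb \<Rightarrow> lincomb" where
  "collect_insert p [] = [p]"
| "collect_insert p (q # ys) =
     (if snd p = snd q then (fst p + fst q, snd q) # ys else q # collect_insert p ys)"

definition collect :: "lincomb \<Rightarrow> lincomb" where
  "collect xs = foldr collect_insert xs []"

section \<open>The algebra \<open>W_3^c\<close>\<close>

locale w3_algebra = vertex_alg sm vac pr for sm :: "complex \<Rightarrow> 'v::ab_group_add \<Rightarrow> 'v" and vac pr +
  fixes L W :: 'v and c :: complex
  assumes c_neq: "c \<noteq> - 22 / 5"
    and LL3: "pr 3 L L = sm (c / 2) vac"
    and LL2: "pr 2 L L = 0"
    and LL1: "pr 1 L L = sm 2 L"
    and LL0: "pr 0 L L = vderiv pr vac L"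
    and LL_high: "\<forall>m\<ge>4. pr m L L = 0"
    and LW1: "pr 1 L W = sm 3 W"
    and LW0: "pr 0 L W = vderiv pr vac W"
    and LW_high: "\<forall>m\<ge>2. pr m L W = 0"
    and WW5: "pr 5 W W = sm (c / 3) vac"
    and WW4: "pr 4 W W = 0"
    and WW3: "pr 3 W W = sm 2 L"
    and WW2: "pr 2 W W = vderiv pr vac L"
    and WW1: "pr 1 W W = sm (32 / (22 + 5 * c)) (nop pr L L)
                          + sm (3 * (c - 2) / (2 * (22 + 5 * c))) ((vderiv pr vac ^^ 2) L)"
    and WW0: "pr 0 W W = sm (32 / (22 + 5 * c)) (nop pr (vderiv pr vac L) L)
                          + sm ((c - 2) / (3 * (22 + 5 * c))) ((vderiv pr vac ^^ 3) L)"
    and WW_high: "\<forall>m\<ge>6. pr m W W = 0"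
begin

lemma denominator_nonzero: "22 + 5 * c \<noteq> 0"
proof
  assume "22 + 5 * c = 0"
  then have "c = - 22 / 5" by (simp add: field_simps add_eq_0_iff2)
  with c_neq show False ..
qed

lemma W_L_commutator:
  "pr k W (pr m L x) = pr m L (pr k W x) + sm (of_int (k - 2 * m)) (pr (k + m - 1) W x)"
proof -
  have "pr m L (pr k W x) - pr k W (pr m L x)
      = (\<Sum>j<2. sm ((of_int m :: complex) gchoose j) (pr (m + k - int j) (pr (int j) L W) x))"
    by (rule commutator_formula) (use LW_high in auto)
  also have "\<dots> = sm (of_int (2 * m - k)) (pr (k + m - 1) W x)"
    by (simp add: eval_nat_numeral LW0 LW1 pr_vderiv_left pr_scale_left algebra_simps
             flip: scale_left_diff_distrib scale_left_distrib)
  also have "\<dots> = - sm (of_int (k - 2 * m)) (pr (k + m - 1) W x)"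
    by (simp flip: scale_minus_left)
  finally show ?thesis by (simp add: algebra_simps)
qed

lemma L_L_commutator:
  assumes "m + k \<noteq> 2"
  shows "pr m L (pr k L x) = pr k L (pr m L x) + sm (of_int (m - k)) (pr (m + k - 1) L x)"
proof -
  have "pr m L (pr k L x) - pr k L (pr m L x)
      = (\<Sum>j<4. sm ((of_int m :: complex) gchoose j) (pr (m + k - int j) (pr (int j) L L) x))"
    by (rule commutator_formula) (use LL_high in auto)
  also have "\<dots> = sm (of_int (m - k)) (pr (m + k - 1) L x)"
    using assms
    by (simp add: eval_nat_numeral LL0 LL1 LL2 LL3 pr_vderiv_left pr_scale_left pr_vac_left
                  algebra_simps flip: scale_left_diff_distrib scale_left_distrib)
  finally show ?thesis by (simp add: algebra_simps)
qed

definition act :: "letter \<Rightarrow> 'v \<Rightarrow> 'v" where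
  "act x y = pr (snd x) (if fst x then L else W) y"

definition eval_word :: "word \<Rightarrow> 'v" where
  "eval_word w = foldr act w vac"

definition eval_lc :: "lincomb \<Rightarrow> 'v" where
  "eval_lc xs = sum_list (map (\<lambda>(a, w). sm a (eval_word w)) xs)"

lemma eval_word_simps [simp]:
  "eval_word [] = vac"
  "eval_word (x # w) = act x (eval_word w)"
  by (simp_all add: eval_word_def)

lemma eval_lc_Nil [simp]: "eval_lc [] = 0"
  and eval_lc_Cons: "eval_lc ((a, w) # xs) = sm a (eval_word w) + eval_lc xs"
  and eval_lc_append: "eval_lc (xs @ ys) = eval_lc xs + eval_lc ys"
  by (simp_all add: eval_lc_def)

lemma eval_lc_scale: "eval_lc (lc_scale t xs) = sm t (eval_lc xs)"
  by (induction xs) (auto simp: eval_lc_Cons scale_right_distrib)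

lemma act_eval_lc: "act x (eval_lc xs) = eval_lc (lc_prefix x xs)"
  by (induction xs) (auto simp: eval_lc_Cons act_def pr_add_right pr_scale_right)

lemma eval_lc_bind:
  assumes "\<And>w. eval_lc (g w) = act x (eval_word w)"
  shows "eval_lc (lc_bind xs g) = act x (eval_lc xs)"
  by (induction xs)
     (auto simp: assms eval_lc_append eval_lc_scale eval_lc_Cons act_def pr_add_right pr_scale_right)

lemma eval_normal_insert: "eval_lc (normal_insert f x w) = act x (eval_word w)"
proof (induction f x w rule: normal_insert.induct)
  case (2 f x)
  then show ?case by (auto simp: eval_lc_Cons act_def pr_vac_right)
next
  case (3 f x y w)
  obtain b k b' k' where xy: "x = (b, k)" "y = (b', k')" by fastforce
  have bind: "eval_lc (lc_bind (normal_insert f x w) (normal_insert f y)) = act y (act x (eval_word w))"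
    if "\<not> fst x \<and> fst y \<or> fst x \<and> fst y \<and> snd y < snd x \<and> snd x + snd y \<noteq> 2"
    using 3 that by (auto simp: eval_lc_bind)
  consider "\<not> b" "b'" | "b" "b'" "k' < k" "k + k' \<noteq> 2"
    | "\<not> (\<not> b \<and> b')" "\<not> (b \<and> b' \<and> k' < k \<and> k + k' \<noteq> 2)"
    by blast
  then show ?case
  proof cases
    case 1
    with 3 bind show ?thesis
      by (simp add: xy eval_lc_append eval_lc_scale act_def W_L_commutator)
  next
    case 2
    with 3 bind show ?thesis
      using L_L_commutator[of k k' "eval_word w"]
      by (simp add: xy eval_lc_append eval_lc_scale act_def)
  qed (auto simp: xy eval_lc_Cons)
qed (simp add: eval_lc_Cons)

lemma eval_normal_lc: "eval_lc (normal_lc f xs) = eval_lc xs"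
proof -
  have "eval_lc (normal_word f w) = eval_word w" for w
    by (induction w) (auto simp: eval_lc_Cons eval_lc_bind eval_normal_insert)
  then show ?thesis
    by (induction xs) (auto simp: normal_lc_def eval_lc_append eval_lc_scale eval_lc_Cons)
qed

lemma vderiv_eval_word: "D (eval_word w) = eval_lc (deriv_word w)"
proof (induction w)
  case (Cons x w)
  then show ?case
    by (cases x) (simp add: act_def vderiv_pr eval_lc_append eval_lc_Cons act_eval_lc[symmetric])
qed (simp add: vderiv_def pr_vac_left)

lemma vderiv_eval_lc: "D (eval_lc xs) = eval_lc (deriv_lc xs)"
  by (induction xs)
     (auto simp: deriv_lc_def eval_lc_append eval_lc_scale eval_lc_Cons vderiv_add vderiv_scale
                 vderiv_eval_word, simp add: vderiv_def)

lemma eval_collect: "eval_lc (collect xs) = eval_lc xs"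
proof -
  have "eval_lc (collect_insert p ys) = eval_lc (p # ys)" for p ys
    by (induction p ys rule: collect_insert.induct)
       (auto simp: eval_lc_Cons scale_left_distrib add_ac)
  then show ?thesis
    by (induction xs) (auto simp: collect_def eval_lc_Cons)
qed

lemma eval_lc_zero_coeffs: "\<forall>p\<in>set xs. fst p = 0 \<Longrightarrow> eval_lc xs = 0"
  by (induction xs) (auto simp: eval_lc_Cons)

lemma eval_lc_eq_zeroI:
  assumes "\<forall>p\<in>set (collect (normal_lc f xs)). fst p = 0"
  shows "eval_lc xs = 0"
  using eval_lc_zero_coeffs[OF assms] by (simp add: eval_collect eval_normal_lc)

lemma act_modes: "pr k L y = act (True, k) y" "pr k W y = act (False, k) y"
  by (simp_all add: act_def)

lemma generators_as_lc:
  "act x L = eval_lc [(1, [x, (True, -1)])]"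
  "act x W = eval_lc [(1, [x, (False, -1)])]"
  "sm t L = eval_lc [(t, [(True, -1)])]"
  "D L = eval_lc [(1, [(True, -2)])]"
  "D W = eval_lc [(1, [(False, -2)])]"
  "act x vac = eval_lc [(1, [x])]"
  "act x (sm t y) = sm t (act x y)"
  by (simp_all add: eval_lc_Cons act_def vderiv_def pr_minus_one_vac pr_scale_right)

lemma eval_lc_homs:
  "act x (eval_lc xs) = eval_lc (lc_prefix x xs)"
  "D (eval_lc xs) = eval_lc (deriv_lc xs)"
  "sm t (eval_lc xs) = eval_lc (lc_scale t xs)"
  "- eval_lc xs = eval_lc (lc_scale (-1) xs)"
  "eval_lc xs + eval_lc ys = eval_lc (xs @ ys)"
  "eval_lc xs - eval_lc ys = eval_lc (xs @ lc_scale (-1) ys)"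
  by (simp_all add: act_eval_lc vderiv_eval_lc eval_lc_scale eval_lc_append)

lemma nop_W_W_zero_mode:
  "pr 0 (nop pr W W) W = sm 2 (pr (-1) W (pr 0 W W) + pr (-2) W (pr 1 W W) + pr (-3) W (pr 2 W W)
     + pr (-4) W (pr 3 W W) + pr (-5) W (pr 4 W W) + pr (-6) W (pr 5 W W))"
proof -
  have "pr 0 (nop pr W W) W = (\<Sum>j<6. pr (-1 - int j) W (pr (int j) W W) + pr (-1 - int j) W (pr (int j) W W))"
    by (rule normal_product_zero_mode) (use WW_high in auto)
  also have "\<dots> = sm 2 (\<Sum>j<6. pr (-1 - int j) W (pr (int j) W W))"
    using scale_left_distrib[of 1 1] by (simp add: sum.distrib scale_sum_right)
  finally show ?thesis by (simp add: eval_nat_numeral add.assoc)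
qed

lemma zero_mode_identity_base:
  "pr 0 (nop pr W W) W
   - sm (64 / (22 + 5 * c)) (D (nop pr L (nop pr L W)))
   + sm (64 / (22 + 5 * c)) (nop pr (D L) (nop pr L W))
   - sm (10 * (14 + c) / (3 * (22 + 5 * c))) ((D ^^ 3) (nop pr L W))
   + sm ((86 + 5 * c) / (22 + 5 * c)) ((D ^^ 2) (nop pr (D L) W))
   - sm ((26 + 3 * c) / (22 + 5 * c)) (D (nop pr ((D ^^ 2) L) W))
   + sm (2 * (c - 2) / (3 * (22 + 5 * c))) (nop pr ((D ^^ 3) L) W)
   - sm ((-186 + 11 * c + c ^ 2) / (36 * (22 + 5 * c))) ((D ^^ 5) W)
   = 0"
proof -
  have iterates: "(D ^^ 2) x = D (D x)" "(D ^^ 3) x = D (D (D x))" "(D ^^ 5) x = D (D (D (D (D x))))"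
    for x by (simp_all add: eval_nat_numeral)
  define d where "d = 22 + 5 * c"
  have c: "c = (d - 22) / 5" and "d \<noteq> 0"
    using denominator_nonzero by (simp_all add: d_def)
  text \<open>The rewriting passes must come in this order: the OPE before \<open>nop\<close> is unfolded, and
    \<open>pr k L\<close>, \<open>pr k W\<close> must become letters before the vectors \<open>L\<close>, \<open>W\<close> become words. Fuel 12
    suffices to reach normal form; writing \<open>c\<close> through \<open>d\<close> leaves \<open>field_simps\<close> a single
    nonzero denominator.\<close>
  show ?thesis
    apply (simp only: nop_W_W_zero_mode WW0 WW1 WW2 WW3 WW4 WW5)
    apply (simp only: nop_def iterates pr_vderiv_left pr_zero_right add_0_right act_modes)
    apply (simp only: generators_as_lc eval_lc_homs)
    apply (rule eval_lc_eq_zeroI[of 12])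
    apply (simp add: normal_lc_def collect_def deriv_lc_def eval_nat_numeral)
    apply (simp add: c field_simps \<open>d \<noteq> 0\<close>)
    done
qed

lemma zero_mode_identity:
  assumes "n \<ge> 1"
  shows "pr 0 (nop pr W W) ((D ^^ (n - 1)) W)
         - sm (64 / (22 + 5 * c)) ((D ^^ n) (nop pr L (nop pr L W)))
         + sm (64 / (22 + 5 * c)) ((D ^^ (n - 1)) (nop pr (D L) (nop pr L W)))
         - sm (10 * (14 + c) / (3 * (22 + 5 * c))) ((D ^^ (n + 2)) (nop pr L W))
         + sm ((86 + 5 * c) / (22 + 5 * c)) ((D ^^ (n + 1)) (nop pr (D L) W))
         - sm ((26 + 3 * c) / (22 + 5 * c)) ((D ^^ n) (nop pr ((D ^^ 2) L) W))
         + sm (2 * (c - 2) / (3 * (22 + 5 * c))) ((D ^^ (n - 1)) (nop pr ((D ^^ 3) L) W))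
         - sm ((-186 + 11 * c + c ^ 2) / (36 * (22 + 5 * c))) ((D ^^ (n + 4)) W)
         = 0"
proof -
  obtain m where n: "n = Suc m"
    using assms by (cases n) auto
  have exponents: "Suc m - 1 = m" "Suc m + 1 = m + 2" "Suc m + 2 = m + 3" "Suc m + 4 = m + 5"
    by simp_all
  have split: "(D ^^ (m + k)) x = (D ^^ m) ((D ^^ k) x)" for k x
    by (simp add: funpow_add)
  show ?thesis
    using arg_cong[OF zero_mode_identity_base, of "D ^^ m"]
    unfolding n exponents split funpow_Suc_right comp_apply
    by (simp only: funpow_vderiv_add funpow_vderiv_diff funpow_vderiv_scale
                   zero_mode_funpow_vderiv funpow_vderiv_zero)
qed

end

theorem lemma7p2:
  fixes sm :: "complex \<Rightarrow> 'v::ab_group_add \<Rightarrow> 'v"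
    and vac :: 'v and pr :: "int \<Rightarrow> 'v \<Rightarrow> 'v \<Rightarrow> 'v"
    and L W :: 'v and c :: complex and n :: nat
  defines "D \<equiv> vderiv pr vac"
    and "NO \<equiv> nop pr"
  assumes VA: "vertex_algebra sm vac pr"
    and hc: "c \<noteq> - 22 / 5"
    \<comment> \<open>L(z)L(w) OPE\<close>
    and LL3: "pr 3 L L = sm (c / 2) vac"
    and LL2: "pr 2 L L = 0"
    and LL1: "pr 1 L L = sm 2 L"
    and LL0: "pr 0 L L = D L"
    and LLhi: "\<forall>m\<ge>4. pr m L L = 0"
    \<comment> \<open>L(z)W(w) OPE\<close>
    and LW1: "pr 1 L W = sm 3 W"
    and LW0: "pr 0 L W = D W"
    and LWhi: "\<forall>m\<ge>2. pr m L W = 0"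
    \<comment> \<open>W(z)W(w) OPE\<close>
    and WW5: "pr 5 W W = sm (c / 3) vac"
    and WW4: "pr 4 W W = 0"
    and WW3: "pr 3 W W = sm 2 L"
    and WW2: "pr 2 W W = D L"
    and WW1: "pr 1 W W = sm (32 / (22 + 5 * c)) (NO L L)
                          + sm (3 * (c - 2) / (2 * (22 + 5 * c))) ((D ^^ 2) L)"
    and WW0: "pr 0 W W = sm (32 / (22 + 5 * c)) (NO (D L) L)
                          + sm ((c - 2) / (3 * (22 + 5 * c))) ((D ^^ 3) L)"
    and WWhi: "\<forall>m\<ge>6. pr m W W = 0"
    and hn: "n \<ge> 1"
  shows "pr 0 (NO W W) ((D ^^ (n - 1)) W)
         - sm (64 / (22 + 5 * c)) ((D ^^ n) (NO L (NO L W)))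
         + sm (64 / (22 + 5 * c)) ((D ^^ (n - 1)) (NO (D L) (NO L W)))
         - sm (10 * (14 + c) / (3 * (22 + 5 * c))) ((D ^^ (n + 2)) (NO L W))
         + sm ((86 + 5 * c) / (22 + 5 * c)) ((D ^^ (n + 1)) (NO (D L) W))
         - sm ((26 + 3 * c) / (22 + 5 * c)) ((D ^^ n) (NO ((D ^^ 2) L) W))
         + sm (2 * (c - 2) / (3 * (22 + 5 * c))) ((D ^^ (n - 1)) (NO ((D ^^ 3) L) W))
         - sm ((-186 + 11 * c + c ^ 2) / (36 * (22 + 5 * c))) ((D ^^ (n + 4)) W)
         = 0"
proof -
  interpret w3_algebra sm vac pr L W c
    using VA hc LL3 LL2 LL1 LL0 LLhi LW1 LW0 LWhi WW5 WW4 WW3 WW2 WW1 WW0 WWhi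
    unfolding D_def NO_def w3_algebra_def w3_algebra_axioms_def vertex_alg_def by blast
  show ?thesis
    using zero_mode_identity[OF hn] unfolding D_def NO_def .
qed

end
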